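(* Let $d\ge 1$ be an integer and let $\mathcal{P}$ be the set of all (nonempty) integer partitions. As formal power series, $$\sum_{\lambda\in\mathcal{P}}t^{\mathrm{dif}_d(\lambda)}x^{\ell(\lambda)}y^{\lambda_1}=\frac{xy}{1-y-tx(1-y^d)-xy^d}.$$ In particular, $$\sum_{\lambda\in\mathcal{P}}t^{\mathrm{dif}_d(\lambda)}x^{\Gamma(\lambda)}=\frac{x}{1-x-tx(1-x^d)-x^{d+1}}.$$
   Context: A partition is a finite nonempty weakly decreasing sequence $\lambda=(\lambda_1,\ldots,\lambda_k)$ of positive integers; $\ell(\lambda)=k$ and $\lambda_1$ is the largest part. The perimeter is $\Gamma(\lambda)=\lambda_1+\ell(\lambda)-1$. $\mathrm{dif}_d(\lambda)=|\{i:1\le i<\ell(\lambda),\ \lambda_i-\lambda_{i+1}<d\}|$. *)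

theory Defs
  imports "HOL-Computational_Algebra.Formal_Power_Series"
begin

definition is_partition :: "nat list \<Rightarrow> bool" where
  "is_partition l \<longleftrightarrow> l \<noteq> [] \<and> sorted_wrt (\<ge>) l \<and> (\<forall>p\<in>set l. 0 < p)"

definition largest_part :: "nat list \<Rightarrow> nat" where
  "largest_part l = hd l"

definition perimeter :: "nat list \<Rightarrow> nat" where
  "perimeter l = largest_part l + length l - 1"

text \<open>dif_d: number of indices i (1 <= i < length) with lambda_i - lambda_(i+1) < d
  (0-based list indices here).\<close>
definition dif :: "nat \<Rightarrow> nat list \<Rightarrow> nat" where
  "dif d l = card {i. Suc i < length l \<and> l ! i - l ! Suc i < d}"

text \<open>Trivariate formal power series are nested: (real fps) fps fps.
  Innermost variable t, middle x, outermost y.\<close>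
definition var_y :: "real fps fps fps" where "var_y = fps_X"
definition var_x :: "real fps fps fps" where "var_x = fps_const fps_X"
definition var_t :: "real fps fps fps" where "var_t = fps_const (fps_const fps_X)"

text \<open>The formal sum over all partitions of t^dif x^length y^largest part,
  defined coefficientwise: coefficient of y^c x^b t^a counts the partitions
  with largest part c, length b and dif_d = a (a finite set).\<close>
definition gf3 :: "nat \<Rightarrow> real fps fps fps" where
  "gf3 d = Abs_fps (\<lambda>c. Abs_fps (\<lambda>b. Abs_fps (\<lambda>a.
     real (card {l. is_partition l \<and> dif d l = a \<and> length l = b \<and> largest_part l = c}))))"

text \<open>Bivariate: outer variable x, inner t; sum of t^dif x^perimeter.\<close>
definition var_x2 :: "real fps fps" where "var_x2 = fps_X"
definition var_t2 :: "real fps fps" where "var_t2 = fps_const fps_X"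

definition gf2 :: "nat \<Rightarrow> real fps fps" where
  "gf2 d = Abs_fps (\<lambda>n. Abs_fps (\<lambda>a.
     real (card {l. is_partition l \<and> dif d l = a \<and> perimeter l = n})))"

end

theory Submission
  imports Defs
begin

(* Removing the largest part c of a partition leaves either nothing or a partition with
   largest part c - i for some gap i >= 0, and this gap contributes to dif_d exactly when
   i < d.  The gaps therefore carry the weight series W = t (1 + ... + y^(d-1)) + y^d/(1 - y)
   = (t (1 - y^d) + y^d)/(1 - y), and the decomposition G = x (y/(1 - y) + W G) rearranges
   to the first formula.  Since Gamma(lambda) = lambda_1 + l(lambda) - 1, the second series
   is the first one after the substitution y := x, divided by x; this substitution is a
   ring homomorphism R[[x]][[y]] -> R[[x]], so it can be applied to the identity
   G (1 - y - t x (1 - y^d) - x y^d) = x y. *)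

unbundle fps_syntax

lemma is_partition_Cons:
  "is_partition (c # \<mu>) \<longleftrightarrow> 0 < c \<and> (\<mu> = [] \<or> is_partition \<mu> \<and> hd \<mu> \<le> c)"
  unfolding is_partition_def by (cases \<mu>) auto

lemma dif_singleton [simp]: "dif d [c] = 0"
  by (simp add: dif_def)

lemma dif_Cons:
  assumes "\<mu> \<noteq> []"
  shows "dif d (c # \<mu>) = (if c - hd \<mu> < d then 1 else 0) + dif d \<mu>"
proof -
  define S where "S = {i. Suc i < length \<mu> \<and> \<mu> ! i - \<mu> ! Suc i < d}"
  have "{i. Suc i < length (c # \<mu>) \<and> (c # \<mu>) ! i - (c # \<mu>) ! Suc i < d}
      = (if c - hd \<mu> < d then {0} else {}) \<union> Suc ` S" (is "?L = ?R")
  proof (rule set_eqI)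
    fix i
    show "i \<in> ?L \<longleftrightarrow> i \<in> ?R"
      using assms by (cases i) (auto simp: S_def hd_conv_nth)
  qed
  moreover have "finite S"
    by (rule finite_subset[of _ "{..<length \<mu>}"]) (auto simp: S_def)
  ultimately show ?thesis
    by (simp add: dif_def S_def[symmetric] card_image)
qed

definition partitions :: "nat \<Rightarrow> nat \<Rightarrow> nat \<Rightarrow> nat \<Rightarrow> nat list set" where
  "partitions d c b a =
     {l. is_partition l \<and> dif d l = a \<and> length l = b \<and> largest_part l = c}"

lemma finite_partitions: "finite (partitions d c b a)"
proof (rule finite_subset)
  show "partitions d c b a \<subseteq> {l. set l \<subseteq> {..c} \<and> length l = b}"
    by (auto simp: partitions_def largest_part_def is_partition_def neq_Nil_conv)
  show "finite {l. set l \<subseteq> {..c} \<and> length l = b}"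
    by (rule finite_lists_length_eq) simp
qed

lemma partitions_0 [simp]: "partitions d c 0 a = {}"
  by (simp add: partitions_def is_partition_def)

lemma partitions_Suc:
  "partitions d c (Suc b) a =
     (if b = 0 \<and> 0 < c \<and> a = 0 then {[c]} else {}) \<union>
     (\<Union>i\<le>c. Cons c ` {\<mu>. is_partition \<mu> \<and> length \<mu> = b \<and> largest_part \<mu> = c - i
                           \<and> dif d \<mu> + (if i < d then 1 else 0) = a})"
  (is "?L = ?S \<union> ?U")
proof (intro set_eqI iffI)
  fix l
  assume "l \<in> ?L"
  then obtain \<mu> where l: "l = c # \<mu>" "length \<mu> = b" and part: "is_partition (c # \<mu>)"
    and dif: "dif d (c # \<mu>) = a"
    by (auto simp: partitions_def largest_part_def length_Suc_conv)
  show "l \<in> ?S \<union> ?U"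
  proof (cases "\<mu> = []")
    case True
    then show ?thesis using l part dif by (simp add: is_partition_Cons)
  next
    case False
    with part have "is_partition \<mu>" "hd \<mu> \<le> c"
      by (simp_all add: is_partition_Cons)
    moreover have "dif d \<mu> + (if c - hd \<mu> < d then 1 else 0) = a"
      using dif False by (simp add: dif_Cons)
    ultimately have "\<mu> \<in> {\<mu>. is_partition \<mu> \<and> length \<mu> = b
                   \<and> largest_part \<mu> = c - (c - hd \<mu>)
                   \<and> dif d \<mu> + (if c - hd \<mu> < d then 1 else 0) = a}"
      using l by (simp add: largest_part_def)
    then have "l \<in> ?U"
      using l by (intro UN_I[of "c - hd \<mu>"]) auto
    then show ?thesis ..
  qed
next
  fix l
  assume "l \<in> ?S \<union> ?U"
  then show "l \<in> ?L"
  proof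
    assume "l \<in> ?S"
    then have "l = [c]" "b = 0" "0 < c" "a = 0"
      by (simp_all split: if_splits)
    then show ?thesis
      by (simp add: partitions_def largest_part_def is_partition_def)
  next
    assume "l \<in> ?U"
    then obtain i \<mu> where i: "i \<le> c" and l: "l = c # \<mu>" and "length \<mu> = b"
      and part: "is_partition \<mu>" and hd: "hd \<mu> = c - i"
      and dif: "dif d \<mu> + (if i < d then 1 else 0) = a"
      by (auto simp: largest_part_def)
    have "\<mu> \<noteq> []" "0 < hd \<mu>"
      using part by (auto simp: is_partition_def)
    then have "is_partition l" "dif d l = a"
      using i l part hd dif by (auto simp: is_partition_Cons dif_Cons)
    then show ?thesis
      using l \<open>length \<mu> = b\<close> by (simp add: partitions_def largest_part_def)
  qed
qed

lemma card_partitions_Suc: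
  "card (partitions d c (Suc b) a) =
     (if b = 0 \<and> 0 < c \<and> a = 0 then 1 else 0) +
     (\<Sum>i\<le>c. if i < d then (if a = 0 then 0 else card (partitions d (c - i) b (a - 1)))
              else card (partitions d (c - i) b a))"
proof -
  define T where "T i = {\<mu>. is_partition \<mu> \<and> length \<mu> = b \<and> largest_part \<mu> = c - i
                           \<and> dif d \<mu> + (if i < d then 1 else 0) = a}" for i
  have T_eq: "T i = (if i < d then (if a = 0 then {} else partitions d (c - i) b (a - 1))
                      else partitions d (c - i) b a)" for i
    by (auto simp: T_def partitions_def)
  have fin_T: "finite (T i)" for i
    by (simp add: T_eq finite_partitions)
  have card_U: "card (\<Union>i\<le>c. Cons c ` T i) = (\<Sum>i\<le>c. card (T i))"
  proof -
    have "card (\<Union>i\<le>c. Cons c ` T i) = (\<Sum>i\<le>c. card (Cons c ` T i))"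
      by (rule card_UN_disjoint) (simp_all add: fin_T, auto simp: T_def)
    then show ?thesis
      by (simp add: card_image)
  qed
  have "[c] \<notin> (\<Union>i\<le>c. Cons c ` T i)"
    by (auto simp: T_def is_partition_def)
  then have "card (partitions d c (Suc b) a) =
      card (if b = 0 \<and> 0 < c \<and> a = 0 then {[c]} else {}) + card (\<Union>i\<le>c. Cons c ` T i)"
    unfolding partitions_Suc T_def[symmetric]
    by (intro card_Un_disjoint) (auto simp: fin_T)
  also have "card (\<Union>i\<le>c. Cons c ` T i) =
      (\<Sum>i\<le>c. if i < d then (if a = 0 then 0 else card (partitions d (c - i) b (a - 1)))
               else card (partitions d (c - i) b a))"
    unfolding card_U by (rule sum.cong) (simp_all add: T_eq)
  finally show ?thesis
    by simp
qed

lemma gf3_nth: "gf3 d $ c $ b $ a = real (card (partitions d c b a))"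
  by (simp add: gf3_def partitions_def)

(* fps_const fps_X is the variable t: coefficient i is the weight t^[i < d] of a gap i
   between consecutive parts *)
definition gap_weight :: "nat \<Rightarrow> real fps fps fps" where
  "gap_weight d = Abs_fps (\<lambda>i. if i < d then fps_const fps_X else 1)"

lemma gap_weight_mult_nth:
  "(gap_weight d * F) $ c $ b $ a =
     (\<Sum>i\<le>c. if i < d then (if a = 0 then 0 else F $ (c - i) $ b $ (a - 1))
              else F $ (c - i) $ b $ a)"
proof -
  have "(gap_weight d * F) $ c $ b $ a = (\<Sum>i\<le>c. (gap_weight d $ i * F $ (c - i)) $ b $ a)"
    by (simp add: fps_mult_nth atLeast0AtMost fps_sum_nth)
  also have "\<dots> = (\<Sum>i\<le>c. if i < d then (if a = 0 then 0 else F $ (c - i) $ b $ (a - 1))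
                    else F $ (c - i) $ b $ a)"
    by (rule sum.cong) (simp_all add: gap_weight_def)
  finally show ?thesis .
qed

lemma gap_weight_mult_one_minus_y:
  "gap_weight d * (1 - var_y) = var_t * (1 - var_y ^ d) + var_y ^ d"
proof (rule fps_ext)
  fix i
  have "(gap_weight d * (1 - var_y)) $ i =
      gap_weight d $ i - (if i = 0 then 0 else gap_weight d $ (i - 1))"
    by (simp add: var_y_def right_diff_distrib mult.commute[of _ fps_X])
  then show "(gap_weight d * (1 - var_y)) $ i = (var_t * (1 - var_y ^ d) + var_y ^ d) $ i"
    by (auto simp: gap_weight_def var_y_def var_t_def algebra_simps)
qed

lemma gf3_decomposition:
  "gf3 d = var_x * (var_y * Abs_fps (\<lambda>_. 1) + gap_weight d * gf3 d)"
proof (intro fps_ext)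
  fix c b a
  show "gf3 d $ c $ b $ a =
      (var_x * (var_y * Abs_fps (\<lambda>_. 1) + gap_weight d * gf3 d)) $ c $ b $ a"
  proof (cases b)
    case 0
    then show ?thesis by (simp add: var_x_def gf3_nth)
  next
    case (Suc b')
    have "(var_x * (var_y * Abs_fps (\<lambda>_. 1) + gap_weight d * gf3 d)) $ c $ b $ a
        = (var_y * Abs_fps (\<lambda>_. 1)) $ c $ b' $ a + (gap_weight d * gf3 d) $ c $ b' $ a"
      by (simp add: Suc var_x_def)
    also have "\<dots> = gf3 d $ c $ b $ a"
      by (simp add: Suc var_y_def gf3_nth card_partitions_Suc gap_weight_mult_nth of_nat_sum
          if_distrib cong: if_cong)
    finally show ?thesis ..
  qed
qed

lemma geometric_mult_one_minus_X: "Abs_fps (\<lambda>_. 1 :: 'a::ring_1) * (1 - fps_X) = 1"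
  using fps_right_inverse[of "Abs_fps (\<lambda>_. 1 :: 'a)" 1]
    fps_lr_inverse_gp_ring1'(2)[where 'a = 'a]
  by simp

lemma gf3_mult_denominator:
  "gf3 d * (1 - var_y - var_t * var_x * (1 - var_y ^ d) - var_x * var_y ^ d) = var_x * var_y"
proof -
  have geometric: "Abs_fps (\<lambda>_. 1) * (1 - var_y) = 1"
    unfolding var_y_def by (rule geometric_mult_one_minus_X)
  have "gf3 d * (1 - var_y) =
      var_x * (var_y * (Abs_fps (\<lambda>_. 1) * (1 - var_y)) + gap_weight d * (1 - var_y) * gf3 d)"
    by (subst gf3_decomposition) (simp add: algebra_simps)
  also have "\<dots> = var_x * (var_y + (var_t * (1 - var_y ^ d) + var_y ^ d) * gf3 d)"
    by (simp only: geometric gap_weight_mult_one_minus_y mult_1_right)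
  finally show ?thesis
    by (simp add: algebra_simps)
qed

lemma fps_mult_inverse_eq_1:
  fixes f :: "'a::{ring_1,inverse} fps"
  assumes "f $ 0 * inverse (f $ 0) = 1"
  shows "f * inverse f = 1"
  unfolding fps_inverse_def by (rule fps_right_inverse[OF assms])

lemma fps_eq_mult_inverse:
  fixes f g h :: "'a::{comm_ring_1,inverse} fps"
  assumes "f * h = g" and "h $ 0 * inverse (h $ 0) = 1"
  shows "f = g * inverse h"
proof -
  have "f = f * (h * inverse h)"
    by (simp add: fps_mult_inverse_eq_1[OF assms(2)])
  also have "\<dots> = g * inverse h"
    by (simp add: assms(1) mult.assoc[symmetric])
  finally show ?thesis .
qed

lemma gf3_closed_form:
  "gf3 d = var_x * var_y * inverse (1 - var_y - var_t * var_x * (1 - var_y ^ d) - var_x * var_y ^ d)"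
proof (rule fps_eq_mult_inverse[OF gf3_mult_denominator])
  let ?D = "1 - var_y - var_t * var_x * (1 - var_y ^ d) - var_x * var_y ^ d"
  have D00: "?D $ 0 $ 0 = 1"
    by (simp add: var_x_def var_y_def var_t_def)
  show "?D $ 0 * inverse (?D $ 0) = 1"
    by (rule fps_mult_inverse_eq_1) (simp only: D00 fps_inverse_one mult_1_right)
qed

definition fps_subst_outer_X :: "'a::comm_ring_1 fps fps \<Rightarrow> 'a fps" where
  "fps_subst_outer_X F = Abs_fps (\<lambda>n. \<Sum>b\<le>n. F $ (n - b) $ b)"

lemma fps_subst_outer_X_diff:
  "fps_subst_outer_X (F - G) = fps_subst_outer_X F - fps_subst_outer_X G"
  by (simp add: fps_eq_iff fps_subst_outer_X_def sum_subtractf)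

lemma fps_subst_outer_X_fps_const: "fps_subst_outer_X (fps_const f) = f"
proof (rule fps_ext)
  fix n
  have "fps_subst_outer_X (fps_const f) $ n = (\<Sum>b\<le>n. if b = n then f $ b else 0)"
    unfolding fps_subst_outer_X_def by (rule fps_nth_Abs_fps[THEN trans], rule sum.cong) auto
  then show "fps_subst_outer_X (fps_const f) $ n = f $ n"
    by simp
qed

lemma fps_subst_outer_X_one: "fps_subst_outer_X 1 = 1"
  using fps_subst_outer_X_fps_const[of 1] by simp

lemma fps_subst_outer_X_fps_X: "fps_subst_outer_X fps_X = fps_X"
proof (rule fps_ext)
  fix n
  have "fps_subst_outer_X fps_X $ n = (\<Sum>b\<le>n. if b = 0 then (if n = 1 then 1 else 0) else 0)"
    unfolding fps_subst_outer_X_def by (rule fps_nth_Abs_fps[THEN trans], rule sum.cong) auto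
  then show "fps_subst_outer_X fps_X $ n = fps_X $ n"
    by simp
qed

lemma fps_subst_outer_X_mult:
  "fps_subst_outer_X (F * G) = fps_subst_outer_X F * fps_subst_outer_X G"
proof (rule fps_ext)
  fix n :: nat
  define S where "S = {(i, j, k, l). i + j + k + l = n}"
  have "fps_subst_outer_X (F * G) $ n =
      (\<Sum>b\<le>n. \<Sum>i\<le>n - b. \<Sum>j\<le>b. F $ i $ j * G $ (n - b - i) $ (b - j))"
    by (simp add: fps_subst_outer_X_def fps_mult_nth fps_sum_nth atLeast0AtMost)
  also have "\<dots> = (\<Sum>(b, i, j) \<in> (SIGMA b:{..n}. SIGMA i:{..n - b}. {..b}).
                    F $ i $ j * G $ (n - b - i) $ (b - j))"
    by (simp add: sum.Sigma)
  also have "\<dots> = (\<Sum>(i, j, k, l) \<in> S. F $ i $ j * G $ k $ l)"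
    by (rule sum.reindex_bij_witness[where i = "\<lambda>(i, j, k, l). (j + l, i, j)"
          and j = "\<lambda>(b, i, j). (i, j, n - b - i, b - j)"]) (auto simp: S_def)
  also have "\<dots> = (\<Sum>(k, j, l) \<in> (SIGMA k:{..n}. SIGMA j:{..k}. {..n - k}).
                    F $ (k - j) $ j * G $ (n - k - l) $ l)"
    by (rule sum.reindex_bij_witness[where i = "\<lambda>(k, j, l). (k - j, j, n - k - l, l)"
          and j = "\<lambda>(i, j, k, l). (i + j, j, l)"]) (auto simp: S_def)
  also have "\<dots> = (fps_subst_outer_X F * fps_subst_outer_X G) $ n"
    by (simp add: fps_subst_outer_X_def fps_mult_nth atLeast0AtMost sum.Sigma sum_product)
  finally show "fps_subst_outer_X (F * G) $ n = (fps_subst_outer_X F * fps_subst_outer_X G) $ n" .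
qed

lemma fps_subst_outer_X_power: "fps_subst_outer_X (F ^ k) = fps_subst_outer_X F ^ k"
  by (induction k) (simp_all add: fps_subst_outer_X_one fps_subst_outer_X_mult)

lemma partitions_perimeter:
  "{l. is_partition l \<and> dif d l = a \<and> perimeter l = m} =
     (\<Union>b\<le>Suc m. partitions d (Suc m - b) b a)"
proof (intro set_eqI iffI)
  fix l
  assume l: "l \<in> {l. is_partition l \<and> dif d l = a \<and> perimeter l = m}"
  then have "length l \<noteq> 0"
    by (simp add: is_partition_def)
  with l show "l \<in> (\<Union>b\<le>Suc m. partitions d (Suc m - b) b a)"
    by (auto simp: partitions_def perimeter_def)
next
  fix l
  assume "l \<in> (\<Union>b\<le>Suc m. partitions d (Suc m - b) b a)"
  then obtain b where "b \<le> Suc m" "l \<in> partitions d (Suc m - b) b a"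
    by blast
  moreover from this have "b \<noteq> 0"
    by (metis empty_iff partitions_0)
  ultimately show "l \<in> {l. is_partition l \<and> dif d l = a \<and> perimeter l = m}"
    by (auto simp: partitions_def perimeter_def)
qed

lemma card_partitions_perimeter:
  "card {l. is_partition l \<and> dif d l = a \<and> perimeter l = m} =
     (\<Sum>b\<le>Suc m. card (partitions d (Suc m - b) b a))"
  unfolding partitions_perimeter
  by (rule card_UN_disjoint) (simp_all add: finite_partitions, auto simp: partitions_def)

lemma fps_subst_outer_X_gf3: "fps_subst_outer_X (gf3 d) = var_x2 * gf2 d"
proof (intro fps_ext)
  fix n a
  show "fps_subst_outer_X (gf3 d) $ n $ a = (var_x2 * gf2 d) $ n $ a"
  proof (cases n)
    case 0
    then show ?thesis
      by (simp add: fps_subst_outer_X_def var_x2_def gf3_nth)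
  next
    case (Suc m)
    then show ?thesis
      by (simp add: fps_subst_outer_X_def var_x2_def gf3_nth gf2_def fps_sum_nth
          card_partitions_perimeter)
  qed
qed

lemma fps_subst_outer_X_vars:
  "fps_subst_outer_X var_x = var_x2"
  "fps_subst_outer_X var_y = var_x2"
  "fps_subst_outer_X var_t = var_t2"
  by (simp_all add: var_x_def var_y_def var_t_def var_x2_def var_t2_def
      fps_subst_outer_X_fps_const fps_subst_outer_X_fps_X)

lemma gf2_closed_form:
  "gf2 d = var_x2 * inverse (1 - var_x2 - var_t2 * var_x2 * (1 - var_x2 ^ d) - var_x2 ^ (d + 1))"
proof (rule fps_eq_mult_inverse)
  let ?D = "1 - var_x2 - var_t2 * var_x2 * (1 - var_x2 ^ d) - var_x2 ^ (d + 1)"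
  have "fps_subst_outer_X
          (gf3 d * (1 - var_y - var_t * var_x * (1 - var_y ^ d) - var_x * var_y ^ d))
      = fps_subst_outer_X (var_x * var_y)"
    by (simp only: gf3_mult_denominator)
  then have "var_x2 * (gf2 d * ?D) = var_x2 * var_x2"
    by (simp only: fps_subst_outer_X_mult fps_subst_outer_X_diff fps_subst_outer_X_one
        fps_subst_outer_X_power fps_subst_outer_X_gf3 fps_subst_outer_X_vars)
       (simp add: algebra_simps)
  moreover have "var_x2 \<noteq> 0"
    by (simp add: var_x2_def)
  ultimately show "gf2 d * ?D = var_x2"
    by simp
  have D0: "?D $ 0 = 1"
    by (simp add: var_x2_def var_t2_def)
  show "?D $ 0 * inverse (?D $ 0) = 1"
    by (simp only: D0 fps_inverse_one mult_1_right)
qed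

(* Both closed forms also hold for d = 0. *)
theorem lemma3p2:
  fixes d :: nat
  assumes "d \<ge> 1"
  shows "gf3 d = var_x * var_y *
           inverse (1 - var_y - var_t * var_x * (1 - var_y ^ d) - var_x * var_y ^ d)
       \<and> gf2 d = var_x2 *
           inverse (1 - var_x2 - var_t2 * var_x2 * (1 - var_x2 ^ d) - var_x2 ^ (d + 1))"
  using gf3_closed_form gf2_closed_form by blast

end
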